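(* Let $D=\{z\in\mathbb{C}:|z|<1\}$, $\mathbb{T}=\partial D$, and let $A_0(\hat{\mathbb{C}}\setminus\overline{D})$ be the space of functions $f:\{z\in\mathbb{C}:|z|\ge 1\}\to\mathbb{C}$ that are continuous on $\{|z|\ge1\}$, holomorphic on $\{|z|>1\}$ and satisfy $\lim_{z\to\infty}f(z)=0$, endowed with the topology of uniform convergence on compact subsets of $\{z\in\mathbb{C}:|z|\ge1\}$. Then the set of functions $f\in A_0(\hat{\mathbb{C}}\setminus\overline{D})$ such that $f\restriction_{\mathbb{T}}\in Z$ is a dense $G_\delta$ subset of $A_0(\hat{\mathbb{C}}\setminus\overline{D})$.
   Context: A function $g$ on $\mathbb{T}$ is identified with the $2\pi$-periodic function $y\mapsto g(e^{iy})$ on $\mathbb{R}$, and one writes $g(y)$ for $g(e^{iy})$. The class $Z$ consists of all continuous $f:\mathbb{T}\to\mathbb{C}$ such that for every $\theta\in\mathbb{R}$ $$\limsup_{y\to\theta^+}\left|\frac{\operatorname{Re}f(y)-\operatorname{Re}f(\theta)}{y-\theta}\right|=+\infty\quad\text{and}\quad \limsup_{y\to\theta^+}\left|\frac{\operatorname{Im}f(y)-\operatorname{Im}f(\theta)}{y-\theta}\right|=+\infty.$$ *)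

theory Defs
  imports "HOL-Analysis.Analysis"
begin

text \<open>A function on
  the closed set {z. 1 \<le> norm z} is represented by the function complex \<Rightarrow> complex
  that vanishes on the open unit disc (canonical representative).\<close>

definition A0 :: "(complex \<Rightarrow> complex) set" where
  "A0 = {f. continuous_on {z. 1 \<le> norm z} f \<and>
            f holomorphic_on {z. 1 < norm z} \<and>
            (f \<longlongrightarrow> 0) at_infinity \<and>
            (\<forall>z. norm z < 1 \<longrightarrow> f z = 0)}"

definition cc_open :: "(complex \<Rightarrow> complex) set \<Rightarrow> bool" where
  "cc_open U \<longleftrightarrow> U \<subseteq> A0 \<and>
     (\<forall>f\<in>U. \<exists>K e. compact K \<and> K \<subseteq> {z. 1 \<le> norm z} \<and> e > 0 \<and>
        {g\<in>A0. \<forall>z\<in>K. norm (g z - f z) < e} \<subseteq> U)"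

lemma istopology_cc_open: "istopology cc_open"
  unfolding istopology_def
proof (intro conjI allI impI)
  fix S T assume S: "cc_open S" and T: "cc_open T"
  show "cc_open (S \<inter> T)"
    unfolding cc_open_def
  proof (intro conjI ballI)
    show "S \<inter> T \<subseteq> A0" using S unfolding cc_open_def by blast
  next
    fix f assume f: "f \<in> S \<inter> T"
    obtain K1 e1 where 1: "compact K1" "K1 \<subseteq> {z. 1 \<le> norm z}" "e1 > 0"
      "{g\<in>A0. \<forall>z\<in>K1. norm (g z - f z) < e1} \<subseteq> S"
      using S f unfolding cc_open_def by (meson IntD1)
    obtain K2 e2 where 2: "compact K2" "K2 \<subseteq> {z. 1 \<le> norm z}" "e2 > 0"
      "{g\<in>A0. \<forall>z\<in>K2. norm (g z - f z) < e2} \<subseteq> T"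
      using T f unfolding cc_open_def by (meson IntD2)
    show "\<exists>K e. compact K \<and> K \<subseteq> {z. 1 \<le> norm z} \<and> e > 0 \<and>
        {g\<in>A0. \<forall>z\<in>K. norm (g z - f z) < e} \<subseteq> S \<inter> T"
    proof (intro exI conjI)
      show "compact (K1 \<union> K2)" using 1 2 by blast
      show "K1 \<union> K2 \<subseteq> {z. 1 \<le> norm z}" using 1 2 by blast
      show "min e1 e2 > 0" using 1 2 by simp
      show "{g\<in>A0. \<forall>z\<in>K1 \<union> K2. norm (g z - f z) < min e1 e2} \<subseteq> S \<inter> T"
        using 1(4) 2(4) by auto
    qed
  qed
next
  fix \<K> :: "(complex \<Rightarrow> complex) set set"
  assume "\<forall>K\<in>\<K>. cc_open K"
  then have H: "\<And>K. K \<in> \<K> \<Longrightarrow> cc_open K" by blast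
  show "cc_open (\<Union>\<K>)"
    unfolding cc_open_def
  proof (intro conjI ballI)
    show "\<Union>\<K> \<subseteq> A0" using H unfolding cc_open_def by blast
  next
    fix f assume "f \<in> \<Union>\<K>"
    then obtain U where U: "U \<in> \<K>" "f \<in> U" by blast
    then obtain K e where Ke: "compact K" "K \<subseteq> {z. 1 \<le> norm z}" "e > 0"
        "{g\<in>A0. \<forall>z\<in>K. norm (g z - f z) < e} \<subseteq> U"
      using H[OF U(1)] unfolding cc_open_def by meson
    show "\<exists>K e. compact K \<and> K \<subseteq> {z. 1 \<le> norm z} \<and> e > 0 \<and>
        {g\<in>A0. \<forall>z\<in>K. norm (g z - f z) < e} \<subseteq> \<Union>\<K>"
      using Ke U(1) by blast
  qed
qed

definition cc_topology :: "(complex \<Rightarrow> complex) topology" where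
  "cc_topology = topology cc_open"

lemma openin_cc_topology: "openin cc_topology = cc_open"
  unfolding cc_topology_def using istopology_cc_open by simp

definition classZ :: "(complex \<Rightarrow> complex) \<Rightarrow> bool" where
  "classZ f \<longleftrightarrow> continuous_on (sphere 0 1) f \<and>
     (\<forall>\<theta>::real.
        Limsup (at_right \<theta>) (\<lambda>y. ereal \<bar>(Re (f (exp (\<i> * of_real y))) - Re (f (exp (\<i> * of_real \<theta>)))) / (y - \<theta>)\<bar>) = \<infinity> \<and>
        Limsup (at_right \<theta>) (\<lambda>y. ereal \<bar>(Im (f (exp (\<i> * of_real y))) - Im (f (exp (\<i> * of_real \<theta>)))) / (y - \<theta>)\<bar>) = \<infinity>)"

end

theory Submission
  imports Defs "HOL-Complex_Analysis.Cauchy_Integral_Formula"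
begin

text \<open>The class Z asks the boundary real and imaginary parts to be steep (have unbounded right
  difference quotients) at every point. This is the countable intersection over n of the
  conditions "within distance 1/(n+1) to the right of every point the quotient exceeds n", and
  each such condition is open: by compactness of the circle it holds with a uniform margin,
  which survives uniformly small perturbations on the circle.

  For density, approximate f on a compact set by f(r z) with r slightly larger than 1, whose
  boundary values are locally Lipschitz because f is holomorphic across the circle, and add a
  small multiple of the lacunary series \<open>\<Sum>\<^sub>k 4^(-k) z^(-256^k)\<close>. On the circle its real and
  imaginary parts are Weierstrass-type sums \<open>\<Sum>\<^sub>k 4^(-k) \<phi>(256^k y)\<close>, which are steep everywhere,
  and a Lipschitz function plus a steep one is steep.\<close>

lemma Limsup_ereal_eq_infinity_iff:
  "Limsup F (\<lambda>x. ereal (X x)) = \<infinity> \<longleftrightarrow> (\<forall>M. \<not> eventually (\<lambda>x. X x < M) F)"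
proof
  assume inf: "Limsup F (\<lambda>x. ereal (X x)) = \<infinity>"
  show "\<forall>M. \<not> eventually (\<lambda>x. X x < M) F"
  proof (intro allI notI)
    fix M assume "eventually (\<lambda>x. X x < M) F"
    then have "eventually (\<lambda>x. ereal (X x) \<le> ereal M) F"
      by (rule eventually_mono) simp
    then have "Limsup F (\<lambda>x. ereal (X x)) \<le> ereal M"
      by (rule Limsup_bounded)
    with inf show False by simp
  qed
next
  assume unbounded: "\<forall>M. \<not> eventually (\<lambda>x. X x < M) F"
  show "Limsup F (\<lambda>x. ereal (X x)) = \<infinity>"
  proof (rule ccontr)
    assume "Limsup F (\<lambda>x. ereal (X x)) \<noteq> \<infinity>"
    then obtain c where "Limsup F (\<lambda>x. ereal (X x)) \<le> ereal c"
      by (cases "Limsup F (\<lambda>x. ereal (X x))") auto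
    moreover have "ereal c < ereal (c + 1)" by simp
    ultimately have "eventually (\<lambda>x. ereal (X x) < ereal (c + 1)) F"
      unfolding Limsup_le_iff by blast
    then have "eventually (\<lambda>x. X x < c + 1) F"
      by (rule eventually_mono) simp
    with unbounded show False by blast
  qed
qed

definition steep_at :: "(real \<Rightarrow> real) \<Rightarrow> real \<Rightarrow> bool" where
  "steep_at w \<theta> \<longleftrightarrow> (\<forall>M b. \<theta> < b \<longrightarrow> (\<exists>y\<in>{\<theta><..<b}. M * (y - \<theta>) < \<bar>w y - w \<theta>\<bar>))"

lemma steep_at_iff_unbounded_quotient:
  "steep_at w \<theta> \<longleftrightarrow> (\<forall>M b. \<theta> < b \<longrightarrow> (\<exists>y\<in>{\<theta><..<b}. M < \<bar>(w y - w \<theta>) / (y - \<theta>)\<bar>))"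
  unfolding steep_at_def by (auto simp: abs_div pos_less_divide_eq)

lemma Limsup_difference_quotient_eq_infinity_iff:
  "Limsup (at_right \<theta>) (\<lambda>y. ereal \<bar>(w y - w \<theta>) / (y - \<theta>)\<bar>) = \<infinity> \<longleftrightarrow> steep_at w \<theta>"
proof -
  define q where "q y = \<bar>(w y - w \<theta>) / (y - \<theta>)\<bar>" for y
  have "(\<forall>M. \<not> eventually (\<lambda>y. q y < M) (at_right \<theta>)) \<longleftrightarrow>
      (\<forall>M b. \<theta> < b \<longrightarrow> (\<exists>y\<in>{\<theta><..<b}. M < q y))"
  proof (intro iffI allI impI)
    fix M b assume "\<forall>M. \<not> eventually (\<lambda>y. q y < M) (at_right \<theta>)" "\<theta> < b"
    then obtain y where "y \<in> {\<theta><..<b}" "M + 1 \<le> q y"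
      unfolding eventually_at_right_field not_ex not_all not_less
      by (metis greaterThanLessThan_iff less_imp_not_less not_le)
    then show "\<exists>y\<in>{\<theta><..<b}. M < q y" by force
  next
    fix M assume "\<forall>M b. \<theta> < b \<longrightarrow> (\<exists>y\<in>{\<theta><..<b}. M < q y)"
    then show "\<not> eventually (\<lambda>y. q y < M) (at_right \<theta>)"
      unfolding eventually_at_right_field by (metis greaterThanLessThan_iff less_asym)
  qed
  then show ?thesis
    unfolding Limsup_ereal_eq_infinity_iff steep_at_iff_unbounded_quotient q_def .
qed

lemma steep_at_add_locally_lipschitz:
  assumes steep: "steep_at w \<theta>" and "c > 0" and "d > 0"
    and lipschitz: "\<And>y. \<bar>y - \<theta>\<bar> < d \<Longrightarrow> \<bar>v y - v \<theta>\<bar> \<le> C * \<bar>y - \<theta>\<bar>"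
  shows "steep_at (\<lambda>y. v y + c * w y) \<theta>"
  unfolding steep_at_def
proof (intro allI impI)
  fix M b assume "\<theta> < b"
  then obtain y where y: "y \<in> {\<theta><..<min b (\<theta> + d)}"
      "((\<bar>M\<bar> + \<bar>C\<bar>) / c) * (y - \<theta>) < \<bar>w y - w \<theta>\<bar>"
    using steep \<open>d > 0\<close> unfolding steep_at_def by (metis less_add_same_cancel1 min_less_iff_conj)
  have "\<bar>v y - v \<theta>\<bar> \<le> \<bar>C\<bar> * (y - \<theta>)"
    using lipschitz[of y] y(1) by (simp add: mult_right_mono order_trans)
  moreover have "(\<bar>M\<bar> + \<bar>C\<bar>) * (y - \<theta>) < c * \<bar>w y - w \<theta>\<bar>"
    using y(2) \<open>c > 0\<close> by (simp add: field_simps)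
  moreover have "M * (y - \<theta>) \<le> \<bar>M\<bar> * (y - \<theta>)"
    using y(1) by (intro mult_right_mono) auto
  moreover have "\<bar>c * (w y - w \<theta>)\<bar> = c * \<bar>w y - w \<theta>\<bar>"
    using \<open>c > 0\<close> by (simp add: abs_mult)
  moreover have "(v y + c * w y) - (v \<theta> + c * w \<theta>) = c * (w y - w \<theta>) + (v y - v \<theta>)"
    by (simp add: algebra_simps)
  ultimately have "M * (y - \<theta>) < \<bar>(v y + c * w y) - (v \<theta> + c * w \<theta>)\<bar>"
    by (smt (verit, best) distrib_right)
  then show "\<exists>y\<in>{\<theta><..<b}. M * (y - \<theta>) < \<bar>(v y + c * w y) - (v \<theta> + c * w \<theta>)\<bar>"
    using y(1) by auto
qed

definition uniformly_steep :: "real \<Rightarrow> real \<Rightarrow> (real \<Rightarrow> real) \<Rightarrow> bool" where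
  "uniformly_steep \<delta> M w \<longleftrightarrow> (\<forall>\<theta>. \<exists>y\<in>{\<theta><..<\<theta> + \<delta>}. M * (y - \<theta>) < \<bar>w y - w \<theta>\<bar>)"

lemma steep_everywhere_iff_uniformly_steep:
  "(\<forall>\<theta>. steep_at w \<theta>) \<longleftrightarrow> (\<forall>n::nat. uniformly_steep (1 / Suc n) n w)"
proof
  assume "\<forall>\<theta>. steep_at w \<theta>"
  then show "\<forall>n::nat. uniformly_steep (1 / Suc n) n w"
    unfolding steep_at_def uniformly_steep_def by simp
next
  assume uniform: "\<forall>n::nat. uniformly_steep (1 / Suc n) n w"
  show "\<forall>\<theta>. steep_at w \<theta>"
    unfolding steep_at_def
  proof (intro allI impI)
    fix \<theta> M b :: real assume "\<theta> < b"
    obtain n :: nat where n: "max M (1 / (b - \<theta>)) < n"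
      using reals_Archimedean2 by blast
    have "1 / (b - \<theta>) < Suc n" using n by simp
    then have "1 / Suc n < b - \<theta>"
      using \<open>\<theta> < b\<close> by (simp add: field_simps)
    moreover obtain y where y: "y \<in> {\<theta><..<\<theta> + 1 / Suc n}" "n * (y - \<theta>) < \<bar>w y - w \<theta>\<bar>"
      using uniform unfolding uniformly_steep_def by blast
    moreover have "M * (y - \<theta>) \<le> n * (y - \<theta>)"
      using n y(1) by (intro mult_right_mono) auto
    ultimately have "y \<in> {\<theta><..<b}" "M * (y - \<theta>) < \<bar>w y - w \<theta>\<bar>"
      by (auto, linarith)
    then show "\<exists>y\<in>{\<theta><..<b}. M * (y - \<theta>) < \<bar>w y - w \<theta>\<bar>"
      by blast
  qed
qed

lemma steep_margin_on_compact:
  fixes w :: "real \<Rightarrow> real"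
  assumes "continuous_on UNIV w" and "compact S"
    and steep: "\<And>\<theta>. \<theta> \<in> S \<Longrightarrow> \<exists>y\<in>{\<theta><..<\<theta> + \<delta>}. M * (y - \<theta>) < \<bar>w y - w \<theta>\<bar>"
  obtains m where "m > 0"
    "\<And>\<theta>. \<theta> \<in> S \<Longrightarrow> \<exists>y\<in>{\<theta><..<\<theta> + \<delta>}. M * (y - \<theta>) + m < \<bar>w y - w \<theta>\<bar>"
proof -
  define U where "U j = (\<Union>y. {t. t < y \<and> y < t + \<delta> \<and> M * (y - t) + 1 / Suc j < \<bar>w y - w t\<bar>})"
    for j :: nat
  have "open (U j)" for j
    unfolding U_def using \<open>continuous_on UNIV w\<close>
    by (intro open_UN ballI open_Collect_conj open_Collect_less continuous_intros) auto
  moreover have "S \<subseteq> (\<Union>j. U j)"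
  proof
    fix t assume "t \<in> S"
    then obtain y where y: "y \<in> {t<..<t + \<delta>}" "M * (y - t) < \<bar>w y - w t\<bar>"
      using steep by blast
    obtain j :: nat where "inverse (Suc j) < \<bar>w y - w t\<bar> - M * (y - t)"
      using reals_Archimedean y(2) by (metis diff_gt_0_iff_gt)
    then have "t \<in> U j"
      using y unfolding U_def by (auto simp: inverse_eq_divide add.commute)
    then show "t \<in> (\<Union>j. U j)" by blast
  qed
  ultimately obtain J where "finite J" "S \<subseteq> (\<Union>j\<in>J. U j)"
    using compactE_image[OF \<open>compact S\<close>] by metis
  moreover have "U j \<subseteq> U (Max (insert 0 J))" if "j \<in> J" for j
  proof -
    have "j \<le> Max (insert 0 J)" using that \<open>finite J\<close> by simp
    then have "1 / Suc (Max (insert 0 J)) \<le> 1 / Suc j"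
      by (intro divide_left_mono) auto
    then show ?thesis unfolding U_def by fastforce
  qed
  ultimately have "S \<subseteq> U (Max (insert 0 J))" by blast
  show thesis
  proof (rule that)
    fix \<theta> assume "\<theta> \<in> S"
    then have "\<theta> \<in> U (Max (insert 0 J))" using \<open>S \<subseteq> U (Max (insert 0 J))\<close> by blast
    then show "\<exists>y\<in>{\<theta><..<\<theta> + \<delta>}. M * (y - \<theta>) + 1 / Suc (Max (insert 0 J)) < \<bar>w y - w \<theta>\<bar>"
      unfolding U_def by auto
  qed simp
qed

lemma uniformly_steep_robust:
  fixes w :: "real \<Rightarrow> real"
  assumes "continuous_on UNIV w" and periodic: "\<And>t k. w (t + 2 * pi * of_int k) = w t"
    and "uniformly_steep \<delta> M w"
  obtains e where "e > 0" "\<And>v. (\<And>t. \<bar>v t - w t\<bar> < e) \<Longrightarrow> uniformly_steep \<delta> M v"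
proof -
  obtain m where "m > 0" and margin:
      "\<And>\<theta>. \<theta> \<in> {0..2*pi} \<Longrightarrow> \<exists>y\<in>{\<theta><..<\<theta> + \<delta>}. M * (y - \<theta>) + m < \<bar>w y - w \<theta>\<bar>"
    using steep_margin_on_compact[OF \<open>continuous_on UNIV w\<close> compact_Icc]
      \<open>uniformly_steep \<delta> M w\<close> unfolding uniformly_steep_def by metis
  have margin_everywhere: "\<exists>y\<in>{\<theta><..<\<theta> + \<delta>}. M * (y - \<theta>) + m < \<bar>w y - w \<theta>\<bar>"
    for \<theta>
  proof -
    define k where "k = \<lfloor>\<theta> / (2 * pi)\<rfloor>"
    define t where "t = \<theta> - 2 * pi * of_int k"
    have "t \<in> {0..2*pi}"
      unfolding t_def k_def using floor_divide_lower[of "2 * pi" \<theta>] floor_divide_upper[of "2 * pi" \<theta>]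
      by (auto simp: algebra_simps)
    then obtain y where "y \<in> {t<..<t + \<delta>}" "M * (y - t) + m < \<bar>w y - w t\<bar>"
      using margin by blast
    moreover have "\<theta> = t + 2 * pi * of_int k" by (simp add: t_def)
    ultimately show ?thesis
      by (intro bexI[of _ "y + 2 * pi * of_int k"]) (auto simp: periodic)
  qed
  have "uniformly_steep \<delta> M v" if close: "\<And>t. \<bar>v t - w t\<bar> < m / 2" for v
    unfolding uniformly_steep_def
  proof (intro allI)
    fix \<theta>
    obtain y where "y \<in> {\<theta><..<\<theta> + \<delta>}" "M * (y - \<theta>) + m < \<bar>w y - w \<theta>\<bar>"
      using margin_everywhere by blast
    moreover have "\<bar>w y - w \<theta>\<bar> \<le> \<bar>v y - v \<theta>\<bar> + \<bar>v y - w y\<bar> + \<bar>v \<theta> - w \<theta>\<bar>"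
      by linarith
    ultimately show "\<exists>y\<in>{\<theta><..<\<theta> + \<delta>}. M * (y - \<theta>) < \<bar>v y - v \<theta>\<bar>"
      using close[of y] close[of \<theta>] by (intro bexI[of _ y]) auto
  qed
  then show thesis
    using \<open>m > 0\<close> that[of "m / 2"] by auto
qed

definition lacunary_profile :: "(real \<Rightarrow> real) \<Rightarrow> bool" where
  "lacunary_profile \<phi> \<longleftrightarrow>
     (\<forall>a b. \<bar>\<phi> a - \<phi> b\<bar> \<le> \<bar>a - b\<bar>) \<and> (\<forall>a. \<bar>\<phi> a\<bar> \<le> 1) \<and>
     (\<forall>t. \<exists>\<sigma>\<in>{0<..6}. 1 \<le> \<bar>\<phi> (t + \<sigma>) - \<phi> t\<bar>)"

lemma abs_cos_diff_le: "\<bar>cos a - cos b\<bar> \<le> \<bar>a - b\<bar>" for a b :: real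
proof -
  have "\<bar>cos a - cos b\<bar> = 2 * (\<bar>sin ((a + b) / 2)\<bar> * \<bar>sin ((b - a) / 2)\<bar>)"
    by (simp add: cos_diff_cos abs_mult)
  also have "\<dots> \<le> 2 * \<bar>sin ((b - a) / 2)\<bar>"
    using abs_sin_le_one mult_right_mono[OF abs_sin_le_one abs_ge_zero] by simp
  also have "\<dots> \<le> 2 * \<bar>(b - a) / 2\<bar>"
    using abs_sin_x_le_abs_x[of "(b - a) / 2"] by linarith
  finally show ?thesis by simp
qed

lemma cos_big_step: "\<exists>\<sigma>\<in>{0<..6}. 1 \<le> \<bar>cos (t + \<sigma>) - cos t\<bar>" for t :: real
proof -
  have "cos (t + pi/2) - cos t = - (sin t + cos t)"
    by (simp add: cos_add)
  moreover have "cos (t + 3*pi/2) - cos t = sin t - cos t"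
    using cos_periodic_pi[of "t + pi/2"] by (simp add: cos_add add.assoc)
  moreover have "1 \<le> \<bar>sin t + cos t\<bar> \<or> 1 \<le> \<bar>sin t - cos t\<bar>"
  proof (rule ccontr)
    assume "\<not> (1 \<le> \<bar>sin t + cos t\<bar> \<or> 1 \<le> \<bar>sin t - cos t\<bar>)"
    then have "(sin t + cos t)^2 < 1" "(sin t - cos t)^2 < 1"
      by (simp_all add: abs_square_less_1)
    moreover have "(sin t + cos t)^2 + (sin t - cos t)^2 = 2"
      using sin_cos_squared_add[of t] by (simp add: power2_eq_square algebra_simps)
    ultimately show False by simp
  qed
  moreover have "pi/2 \<in> {0<..6}" "3*pi/2 \<in> {0<..6}"
    using pi_less_4 by auto
  ultimately show ?thesis
    by (metis abs_minus_cancel)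
qed

lemma lacunary_profile_cos: "lacunary_profile cos"
  unfolding lacunary_profile_def using abs_cos_diff_le cos_big_step by simp

lemma lacunary_profile_shift:
  "lacunary_profile \<phi> \<Longrightarrow> lacunary_profile (\<lambda>x. \<phi> (x + a))"
  unfolding lacunary_profile_def
  by (metis (no_types, lifting) add.commute add.left_commute add_diff_cancel_left)

definition lacunary_sum :: "(real \<Rightarrow> real) \<Rightarrow> real \<Rightarrow> real" where
  "lacunary_sum \<phi> y = (\<Sum>k. (1/4)^k * \<phi> (256^k * y))"

context
  fixes \<phi> :: "real \<Rightarrow> real"
  assumes profile: "lacunary_profile \<phi>"
begin

lemma
  shows profile_lipschitz: "\<bar>\<phi> a - \<phi> b\<bar> \<le> \<bar>a - b\<bar>"
    and profile_bounded: "\<bar>\<phi> a\<bar> \<le> 1"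
    and profile_big_step: "\<exists>\<sigma>\<in>{0<..6}. 1 \<le> \<bar>\<phi> (t + \<sigma>) - \<phi> t\<bar>"
  using profile unfolding lacunary_profile_def by auto

lemma summable_lacunary_terms: "summable (\<lambda>k. (1/4::real)^k * \<phi> (256^k * y))"
  by (rule summable_comparison_test'[OF summable_geometric[of "1/4"], where N=0])
    (auto simp: abs_mult intro: mult_left_le profile_bounded)

lemma
  shows summable_lacunary_increments:
      "summable (\<lambda>k. (1/4::real)^k * (\<phi> (256^k * y) - \<phi> (256^k * x)))"
    and lacunary_sum_diff:
      "lacunary_sum \<phi> y - lacunary_sum \<phi> x = (\<Sum>k. (1/4)^k * (\<phi> (256^k * y) - \<phi> (256^k * x)))"
  using summable_diff[OF summable_lacunary_terms summable_lacunary_terms]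
    suminf_diff[OF summable_lacunary_terms summable_lacunary_terms]
  by (simp_all add: lacunary_sum_def right_diff_distrib)

lemma lacunary_head_bound:
  "\<bar>\<Sum>k<n. (1/4)^k * (\<phi> (256^k * y) - \<phi> (256^k * x))\<bar> \<le> 64^n / 30 * \<bar>y - x\<bar>"
proof -
  have "\<bar>(1/4)^k * (\<phi> (256^k * y) - \<phi> (256^k * x))\<bar> \<le> 64^k * \<bar>y - x\<bar>" for k :: nat
  proof -
    have "\<bar>(1/4)^k * (\<phi> (256^k * y) - \<phi> (256^k * x))\<bar> \<le> (1/4)^k * \<bar>256^k * y - 256^k * x\<bar>"
      by (simp add: abs_mult mult_left_mono profile_lipschitz)
    also have "\<dots> = ((1/4)^k * 256^k) * \<bar>y - x\<bar>"
      by (simp add: abs_mult right_diff_distrib[symmetric])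
    also have "(1/4::real)^k * 256^k = 64^k"
      by (simp add: power_mult_distrib[symmetric])
    finally show ?thesis .
  qed
  then have "\<bar>\<Sum>k<n. (1/4)^k * (\<phi> (256^k * y) - \<phi> (256^k * x))\<bar> \<le> (\<Sum>k<n. 64^k) * \<bar>y - x\<bar>"
    by (simp add: sum_distrib_right order_trans[OF sum_abs sum_mono])
  also have "(\<Sum>k<n. 64^k) = ((64::real)^n - 1) / 63"
    by (simp add: geometric_sum)
  also have "((64::real)^n - 1) / 63 * \<bar>y - x\<bar> \<le> 64^n / 30 * \<bar>y - x\<bar>"
    by (intro mult_right_mono) (simp_all add: field_simps)
  finally show ?thesis .
qed

lemma lacunary_tail_bound:
  "\<bar>\<Sum>j. (1/4)^(j + Suc n) * (\<phi> (256^(j + Suc n) * y) - \<phi> (256^(j + Suc n) * x))\<bar>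
     \<le> 2/3 * (1/4)^n"
proof -
  have bound: "norm ((1/4)^(j + Suc n) * (\<phi> (256^(j + Suc n) * y) - \<phi> (256^(j + Suc n) * x)))
      \<le> (1/4)^(j + Suc n) * 2" for j
    using profile_bounded[of "256^(j + Suc n) * y"] profile_bounded[of "256^(j + Suc n) * x"]
    by (simp add: abs_mult mult_left_mono)
  have sums: "(\<lambda>j. (1/4::real)^(j + Suc n) * 2) sums ((1/4)^Suc n * (4/3) * 2)"
    using sums_mult2[OF sums_mult[OF geometric_sums[of "1/4::real"]], of "(1/4)^Suc n" 2]
    by (simp add: power_add mult_ac)
  have "norm (\<Sum>j. (1/4)^(j + Suc n) * (\<phi> (256^(j + Suc n) * y) - \<phi> (256^(j + Suc n) * x)))
      \<le> (\<Sum>j. (1/4::real)^(j + Suc n) * 2)"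
    by (rule norm_suminf_le[OF bound sums_summable[OF sums]])
  also have "\<dots> = 2/3 * (1/4)^n"
    using sums_unique[OF sums] by simp
  finally show ?thesis by simp
qed

lemma lacunary_increment_lower_bound:
  assumes "\<theta> < y" and "256^n * (y - \<theta>) \<le> 6"
    and step: "1 \<le> \<bar>\<phi> (256^n * y) - \<phi> (256^n * \<theta>)\<bar>"
  shows "64^n * (y - \<theta>) / 45 \<le> \<bar>lacunary_sum \<phi> y - lacunary_sum \<phi> \<theta>\<bar>"
proof -
  define d where "d k = (1/4::real)^k * (\<phi> (256^k * y) - \<phi> (256^k * \<theta>))" for k
  have "lacunary_sum \<phi> y - lacunary_sum \<phi> \<theta> = (\<Sum>j. d (j + Suc n)) + (\<Sum>k<n. d k) + d n"
    using suminf_split_initial_segment[OF summable_lacunary_increments[where y=y and x=\<theta>], of "Suc n"]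
    by (simp add: lacunary_sum_diff d_def)
  \<comment> \<open>the n-th term, of size at least \<open>4^(-n)\<close>, dominates both the head and the tail\<close>
  moreover have "(1/4)^n \<le> \<bar>d n\<bar>"
    using step by (simp add: d_def abs_mult)
  moreover have "\<bar>\<Sum>k<n. d k\<bar> \<le> 64^n / 30 * (y - \<theta>)"
    using lacunary_head_bound[where n=n and y=y and x=\<theta>] \<open>\<theta> < y\<close> by (simp add: d_def)
  moreover have "\<bar>\<Sum>j. d (j + Suc n)\<bar> \<le> 2/3 * (1/4)^n"
    using lacunary_tail_bound[where n=n and y=y and x=\<theta>] by (simp add: d_def)
  moreover have "64^n * (y - \<theta>) \<le> 6 * (1/4)^n"
  proof -
    have "64^n * (y - \<theta>) = (1/4)^n * (256^n * (y - \<theta>))"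
      by (simp add: power_mult_distrib[symmetric])
    also have "\<dots> \<le> (1/4)^n * 6"
      using \<open>256^n * (y - \<theta>) \<le> 6\<close> by (intro mult_left_mono) auto
    finally show ?thesis by simp
  qed
  ultimately show ?thesis by linarith
qed

theorem steep_at_lacunary_sum: "steep_at (lacunary_sum \<phi>) \<theta>"
  unfolding steep_at_def
proof (intro allI impI)
  fix M b :: real assume "\<theta> < b"
  obtain n where n: "max (45 * M) (6 / (b - \<theta>)) < 64^n"
    using real_arch_pow[of "64::real"] by fastforce
  obtain \<sigma> where \<sigma>: "\<sigma> \<in> {0<..6}" "1 \<le> \<bar>\<phi> (256^n * \<theta> + \<sigma>) - \<phi> (256^n * \<theta>)\<bar>"
    using profile_big_step by blast
  \<comment> \<open>step by one oscillation of the n-th term, which is short compared with \<open>b - \<theta>\<close>\<close>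
  define y where "y = \<theta> + \<sigma> / 256^n"
  have scaled: "256^n * (y - \<theta>) = \<sigma>" "256^n * y = 256^n * \<theta> + \<sigma>"
    by (simp_all add: y_def algebra_simps)
  have "\<theta> < y" using \<sigma>(1) by (simp add: y_def)
  have "6 < 64^n * (b - \<theta>)"
    using n \<open>\<theta> < b\<close> by (simp add: divide_less_eq mult.commute)
  also have "\<dots> \<le> 256^n * (b - \<theta>)"
    using \<open>\<theta> < b\<close> by (intro mult_right_mono power_mono) auto
  finally have "6 < 256^n * (b - \<theta>)" .
  then have "256^n * (y - \<theta>) < 256^n * (b - \<theta>)"
    using scaled(1) \<sigma>(1) by simp
  then have "y < b" by simp
  have "M * (y - \<theta>) < 64^n * (y - \<theta>) / 45"
    using n \<open>\<theta> < y\<close> by (simp add: divide_less_eq)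
  also have "\<dots> \<le> \<bar>lacunary_sum \<phi> y - lacunary_sum \<phi> \<theta>\<bar>"
    using \<sigma> scaled \<open>\<theta> < y\<close> by (intro lacunary_increment_lower_bound) auto
  finally show "\<exists>y\<in>{\<theta><..<b}. M * (y - \<theta>) < \<bar>lacunary_sum \<phi> y - lacunary_sum \<phi> \<theta>\<bar>"
    using \<open>\<theta> < y\<close> \<open>y < b\<close> by auto
qed

end

definition gap_series :: "complex \<Rightarrow> complex" where
  "gap_series w = (\<Sum>k. of_real ((1/4)^k) * w ^ (256^k))"

lemma norm_gap_series_term_le:
  fixes w :: complex
  assumes "norm w \<le> 1"
  shows "norm (of_real ((1/4::real)^k) * w ^ (256^k)) \<le> (1/4)^k"
proof -
  have "norm (of_real ((1/4::real)^k) * w ^ (256^k)) = (1/4)^k * norm w ^ (256^k)"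
    by (simp add: norm_mult norm_power del: of_real_power)
  also have "\<dots> \<le> (1/4)^k"
    using assms by (simp add: mult_left_le power_le_one)
  finally show ?thesis .
qed

lemma norm_gap_series_le:
  assumes "norm w \<le> 1"
  shows "norm (gap_series w) \<le> 4/3"
proof -
  have "norm (gap_series w) \<le> (\<Sum>k. (1/4::real)^k)"
    unfolding gap_series_def
    by (rule norm_suminf_le[OF norm_gap_series_term_le[OF assms]]) (simp add: summable_geometric)
  then show ?thesis by (simp add: suminf_geometric)
qed

lemma
  shows continuous_on_gap_series: "continuous_on (cball 0 1) gap_series"
    and holomorphic_on_gap_series: "gap_series holomorphic_on ball 0 1"
proof -
  have limit: "uniform_limit (cball 0 1) (\<lambda>n w. \<Sum>k<n. of_real ((1/4::real)^k) * w ^ (256^k))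
      gap_series sequentially"
    unfolding gap_series_def
  proof (rule Weierstrass_m_test)
    show "norm (of_real ((1/4::real)^k) * w ^ (256^k)) \<le> (1/4)^k" if "w \<in> cball 0 1" for k and w :: complex
      using that by (intro norm_gap_series_term_le) simp
  qed (simp add: summable_geometric)
  have partial_sums: "\<forall>\<^sub>F n in sequentially.
      continuous_on (cball 0 1) (\<lambda>w::complex. \<Sum>k<n. of_real ((1/4::real)^k) * w ^ (256^k)) \<and>
      (\<lambda>w. \<Sum>k<n. of_real ((1/4::real)^k) * w ^ (256^k)) holomorphic_on ball 0 1"
    by (intro always_eventually allI conjI) (auto intro!: continuous_intros holomorphic_intros)
  show "continuous_on (cball 0 1) gap_series" "gap_series holomorphic_on ball 0 1"
    by (rule holomorphic_uniform_limit[OF partial_sums limit trivial_limit_sequentially]; simp)+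
qed

definition exterior_gap :: "complex \<Rightarrow> complex" where
  "exterior_gap z = (if norm z < 1 then 0 else gap_series (inverse z))"

lemma norm_exterior_gap_le: "norm (exterior_gap z) \<le> 4/3"
  using norm_gap_series_le[of "inverse z"]
  by (simp add: exterior_gap_def norm_inverse inverse_le_1_iff)

lemma exterior_gap_in_A0: "exterior_gap \<in> A0"
proof -
  have "continuous_on {z. 1 \<le> norm z} (gap_series \<circ> inverse)"
    by (intro continuous_on_compose continuous_on_subset[OF continuous_on_gap_series]
        continuous_intros) (auto simp: norm_inverse inverse_le_1_iff)
  then have "continuous_on {z. 1 \<le> norm z} exterior_gap"
    by (rule continuous_on_eq) (simp add: exterior_gap_def)
  moreover have "(gap_series \<circ> inverse) holomorphic_on {z. 1 < norm z}"
    by (intro holomorphic_on_compose holomorphic_on_subset[OF holomorphic_on_gap_series]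
        holomorphic_intros) (auto simp: norm_inverse inverse_less_1_iff)
  then have "exterior_gap holomorphic_on {z. 1 < norm z}"
    by (rule holomorphic_transform) (simp add: exterior_gap_def)
  moreover have "(exterior_gap \<longlongrightarrow> 0) at_infinity"
  proof -
    have "isCont gap_series 0"
      using continuous_on_interior[OF continuous_on_gap_series] by simp
    moreover have "gap_series 0 = 0" by (simp add: gap_series_def power_0_left)
    ultimately have "((\<lambda>z. gap_series (inverse z)) \<longlongrightarrow> 0) at_infinity"
      using isCont_tendsto_compose[OF _ tendsto_inverse_0] by metis
    moreover have "\<forall>\<^sub>F z in at_infinity. gap_series (inverse z) = exterior_gap z"
      unfolding eventually_at_infinity by (intro exI[of _ 1]) (simp add: exterior_gap_def)
    ultimately show ?thesis by (rule Lim_transform_eventually)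
  qed
  ultimately show ?thesis
    unfolding A0_def by (simp add: exterior_gap_def)
qed

lemma exterior_gap_cis: "exterior_gap (cis y) = (\<Sum>k. of_real ((1/4)^k) * cis (- (256^k * y)))"
proof -
  have "cis (- y) ^ (256^k) = cis (- (256^k * y))" for k :: nat
    by (simp add: Complex.DeMoivre)
  then show ?thesis
    by (simp add: exterior_gap_def gap_series_def del: of_real_power)
qed

lemma summable_exterior_gap_cis_terms:
  "summable (\<lambda>k. of_real ((1/4::real)^k) * cis (- (256^k * y)))"
  by (rule summable_comparison_test'[OF summable_geometric[of "1/4::real"], where N=0])
    (simp_all add: norm_mult del: of_real_power)

lemma Re_exterior_gap_cis: "Re (exterior_gap (cis y)) = lacunary_sum cos y"
  unfolding exterior_gap_cis bounded_linear.suminf[OF bounded_linear_Re summable_exterior_gap_cis_terms]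
  by (simp add: lacunary_sum_def del: of_real_power)

lemma Im_exterior_gap_cis: "Im (exterior_gap (cis y)) = lacunary_sum (\<lambda>x. cos (x + pi/2)) y"
  unfolding exterior_gap_cis bounded_linear.suminf[OF bounded_linear_Im summable_exterior_gap_cis_terms]
  by (simp add: lacunary_sum_def cos_add del: of_real_power)

definition exterior_dilation :: "real \<Rightarrow> (complex \<Rightarrow> complex) \<Rightarrow> complex \<Rightarrow> complex" where
  "exterior_dilation r f z = (if norm z < 1 then 0 else f (of_real r * z))"

lemma exterior_dilation_in_A0:
  assumes "f \<in> A0" and "1 \<le> r"
  shows "exterior_dilation r f \<in> A0"
proof -
  have f: "continuous_on {z. 1 \<le> norm z} f" "f holomorphic_on {z. 1 < norm z}"
      "(f \<longlongrightarrow> 0) at_infinity"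
    using \<open>f \<in> A0\<close> by (auto simp: A0_def)
  have norm_scaled: "norm z \<le> norm (of_real r * z)" for z :: complex
    using \<open>1 \<le> r\<close> by (simp add: norm_mult mult_le_cancel_right1)
  have "continuous_on {z. 1 \<le> norm z} (f \<circ> (\<lambda>z. of_real r * z))"
    by (intro continuous_on_compose continuous_intros continuous_on_subset[OF f(1)])
      (auto intro: order_trans[OF _ norm_scaled])
  then have "continuous_on {z. 1 \<le> norm z} (exterior_dilation r f)"
    by (rule continuous_on_eq) (simp add: exterior_dilation_def)
  moreover have "(f \<circ> (\<lambda>z. of_real r * z)) holomorphic_on {z. 1 < norm z}"
    by (intro holomorphic_on_compose holomorphic_intros holomorphic_on_subset[OF f(2)])
      (auto intro: order_less_le_trans[OF _ norm_scaled])
  then have "exterior_dilation r f holomorphic_on {z. 1 < norm z}"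
    by (rule holomorphic_transform) (simp add: exterior_dilation_def)
  moreover have "(exterior_dilation r f \<longlongrightarrow> 0) at_infinity"
  proof -
    have "filterlim (\<lambda>z::complex. of_real r * z) at_infinity at_infinity"
      by (rule tendsto_mult_filterlim_at_infinity[OF tendsto_const _ filterlim_ident])
        (use \<open>1 \<le> r\<close> in simp)
    then have "((\<lambda>z. f (of_real r * z)) \<longlongrightarrow> 0) at_infinity"
      by (rule filterlim_compose[OF f(3)])
    moreover have "\<forall>\<^sub>F z in at_infinity. f (of_real r * z) = exterior_dilation r f z"
      unfolding eventually_at_infinity by (intro exI[of _ 1]) (simp add: exterior_dilation_def)
    ultimately show ?thesis by (rule Lim_transform_eventually)
  qed
  ultimately show ?thesis
    unfolding A0_def by (simp add: exterior_dilation_def)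
qed

lemma A0_add_scaled:
  assumes "f \<in> A0" "g \<in> A0"
  shows "(\<lambda>z. f z + of_real c * g z) \<in> A0"
  using assms unfolding A0_def
  by (auto intro!: continuous_intros holomorphic_intros tendsto_eq_intros)

lemma has_derivative_imp_locally_lipschitz_at:
  assumes "(f has_derivative f') (at x)"
  obtains C d where "d > 0" "\<And>y. norm (y - x) < d \<Longrightarrow> norm (f y - f x) \<le> C * norm (y - x)"
proof -
  obtain d where "d > 0" and d: "\<And>y. norm (y - x) < d \<Longrightarrow> norm (f y - f x - f' (y - x)) \<le> norm (y - x)"
    using assms unfolding has_derivative_at_alt by (metis mult_1 zero_less_one)
  obtain K where K: "\<And>h. norm (f' h) \<le> norm h * K"
    using assms bounded_linear.pos_bounded has_derivative_bounded_linear by blast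
  show thesis
  proof (rule that[OF \<open>d > 0\<close>])
    fix y assume "norm (y - x) < d"
    then have "norm (f y - f x) \<le> norm (f' (y - x)) + norm (y - x)"
      using d[of y] norm_triangle_sub[of "f y - f x" "f' (y - x)"] by linarith
    then show "norm (f y - f x) \<le> (K + 1) * norm (y - x)"
      using K[of "y - x"] by (simp add: algebra_simps)
  qed
qed

lemma A0_dilated_boundary_locally_lipschitz:
  assumes "f \<in> A0" and "1 < r"
  obtains C d where "d > 0"
    "\<And>y. \<bar>y - \<theta>\<bar> < d \<Longrightarrow> norm (f (of_real r * cis y) - f (of_real r * cis \<theta>)) \<le> C * \<bar>y - \<theta>\<bar>"
proof -
  define F where "F = (\<lambda>z. f (of_real r * exp (\<i> * z)))"
  have "f holomorphic_on {z. 1 < norm z}" and "open {z::complex. 1 < norm z}"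
    using \<open>f \<in> A0\<close> by (auto simp: A0_def open_Collect_less continuous_intros)
  moreover have "norm (of_real r * exp (\<i> * of_real \<theta>)) = r"
    using \<open>1 < r\<close> by (simp add: norm_mult)
  ultimately have outer: "f field_differentiable at (of_real r * exp (\<i> * of_real \<theta>))"
    using \<open>1 < r\<close> by (intro holomorphic_on_imp_differentiable_at) auto
  have inner: "(\<lambda>z. of_real r * exp (\<i> * z)) field_differentiable at (of_real \<theta>)"
    by (rule holomorphic_on_imp_differentiable_at[of _ UNIV]) (auto intro!: holomorphic_intros)
  have "F field_differentiable at (of_real \<theta>)"
    using field_differentiable_compose[OF inner, of f] outer by (simp add: F_def o_def)
  then obtain D where "(F has_derivative (\<lambda>h. D * h)) (at (of_real \<theta>))"
    unfolding field_differentiable_def has_field_derivative_def by blast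
  then obtain C d where "d > 0" and lipschitz:
      "\<And>z. norm (z - of_real \<theta>) < d \<Longrightarrow> norm (F z - F (of_real \<theta>)) \<le> C * norm (z - of_real \<theta>)"
    by (rule has_derivative_imp_locally_lipschitz_at) blast
  show thesis
  proof (rule that[OF \<open>d > 0\<close>])
    fix y assume "\<bar>y - \<theta>\<bar> < d"
    moreover have "norm (complex_of_real y - of_real \<theta>) = \<bar>y - \<theta>\<bar>"
      by (metis norm_of_real of_real_diff)
    ultimately show "norm (f (of_real r * cis y) - f (of_real r * cis \<theta>)) \<le> C * \<bar>y - \<theta>\<bar>"
      using lipschitz[of "of_real y"] by (simp only: F_def cis_conv_exp)
  qed
qed

lemma classZ_iff_steep_at:
  "classZ f \<longleftrightarrow> continuous_on (sphere 0 1) f \<and>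
     (\<forall>\<theta>. steep_at (\<lambda>y. Re (f (cis y))) \<theta> \<and> steep_at (\<lambda>y. Im (f (cis y))) \<theta>)"
  unfolding classZ_def cis_conv_exp
  using Limsup_difference_quotient_eq_infinity_iff[where w="\<lambda>y. Re (f (exp (\<i> * of_real y)))"]
    Limsup_difference_quotient_eq_infinity_iff[where w="\<lambda>y. Im (f (exp (\<i> * of_real y)))"]
  by simp

lemma A0_continuous_on_sphere: "f \<in> A0 \<Longrightarrow> continuous_on (sphere 0 1) f"
  unfolding A0_def by (auto intro: continuous_on_subset)

lemma classZ_dilation_plus_exterior_gap:
  assumes "f \<in> A0" and "1 < r" and "c > 0"
  shows "classZ (\<lambda>z. exterior_dilation r f z + of_real c * exterior_gap z)"
    (is "classZ ?g")
proof -
  have "?g \<in> A0"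
    using \<open>1 < r\<close> by (intro A0_add_scaled exterior_dilation_in_A0 assms exterior_gap_in_A0) simp
  have boundary: "steep_at (\<lambda>y. P (?g (cis y))) \<theta>"
    if "P = Re \<or> P = Im" and gap: "steep_at (\<lambda>y. P (exterior_gap (cis y))) \<theta>" for P \<theta>
  proof -
    obtain C d where "d > 0" and lipschitz:
        "\<And>y. \<bar>y - \<theta>\<bar> < d \<Longrightarrow> norm (f (of_real r * cis y) - f (of_real r * cis \<theta>)) \<le> C * \<bar>y - \<theta>\<bar>"
      using A0_dilated_boundary_locally_lipschitz[OF \<open>f \<in> A0\<close> \<open>1 < r\<close>] by blast
    have "\<bar>P a - P b\<bar> \<le> norm (a - b)" for a b
      using \<open>P = Re \<or> P = Im\<close> abs_Re_le_cmod[of "a - b"] abs_Im_le_cmod[of "a - b"] by auto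
    then have "\<bar>P (f (of_real r * cis y)) - P (f (of_real r * cis \<theta>))\<bar> \<le> C * \<bar>y - \<theta>\<bar>"
      if "\<bar>y - \<theta>\<bar> < d" for y
      using lipschitz[OF that] order_trans by blast
    then have "steep_at (\<lambda>y. P (f (of_real r * cis y)) + c * P (exterior_gap (cis y))) \<theta>"
      by (rule steep_at_add_locally_lipschitz[OF gap \<open>c > 0\<close> \<open>d > 0\<close>])
    moreover have "P (?g (cis y)) = P (f (of_real r * cis y)) + c * P (exterior_gap (cis y))" for y
      using \<open>P = Re \<or> P = Im\<close> by (auto simp: exterior_dilation_def)
    ultimately show ?thesis by simp
  qed
  have "steep_at (\<lambda>y. Re (exterior_gap (cis y))) \<theta>"
    "steep_at (\<lambda>y. Im (exterior_gap (cis y))) \<theta>" for \<theta>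
    unfolding Re_exterior_gap_cis Im_exterior_gap_cis
    by (intro steep_at_lacunary_sum lacunary_profile_shift lacunary_profile_cos)+
  with \<open>?g \<in> A0\<close> show ?thesis
    using boundary[of Re] boundary[of Im] by (simp add: classZ_iff_steep_at A0_continuous_on_sphere)
qed

lemma
  fixes K :: "complex set"
  assumes "compact K" and K: "K \<subseteq> {z. 1 \<le> norm z}"
  shows compact_dilations: "compact ((\<lambda>(s, z). of_real s * z) ` ({1..2} \<times> K))"
    and dilations_subset_exterior: "(\<lambda>(s, z). of_real s * z) ` ({1..2} \<times> K) \<subseteq> {z. 1 \<le> norm z}"
proof -
  show "compact ((\<lambda>(s, z). of_real s * z) ` ({1..2} \<times> K))"
    using \<open>compact K\<close> by (intro compact_continuous_image compact_Times compact_Icc)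
      (auto intro!: continuous_intros simp: case_prod_unfold)
  have "1 \<le> s * norm z" if "1 \<le> s" "z \<in> K" for s z
    using K that mult_mono[of 1 s 1 "norm z"] by auto
  then show "(\<lambda>(s, z). of_real s * z) ` ({1..2} \<times> K) \<subseteq> {z. 1 \<le> norm z}"
    by (auto simp: norm_mult)
qed

lemma A0_dilation_uniformly_close:
  assumes "f \<in> A0" and "compact K" and K: "K \<subseteq> {z. 1 \<le> norm z}" and "e > 0"
  obtains r where "1 < r" "\<And>z. z \<in> K \<Longrightarrow> norm (exterior_dilation r f z - f z) < e"
proof -
  define K' where "K' = (\<lambda>(s, z). complex_of_real s * z) ` ({1..2} \<times> K)"
  have scaled_in_K': "of_real s * z \<in> K'" if "s \<in> {1..2}" "z \<in> K" for s z
    unfolding K'_def using that by force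
  have "continuous_on {z. 1 \<le> norm z} f"
    using \<open>f \<in> A0\<close> by (simp add: A0_def)
  then have "uniformly_continuous_on K' f"
    unfolding K'_def using compact_dilations[OF \<open>compact K\<close> K] dilations_subset_exterior[OF \<open>compact K\<close> K]
    by (meson compact_uniformly_continuous continuous_on_subset)
  then obtain d where "d > 0" and d: "\<And>x x'. x \<in> K' \<Longrightarrow> x' \<in> K' \<Longrightarrow> dist x' x < d \<Longrightarrow> dist (f x') (f x) < e"
    using \<open>e > 0\<close> unfolding uniformly_continuous_on_def by blast
  obtain B where "B > 0" and B: "\<And>z. z \<in> K \<Longrightarrow> norm z \<le> B"
    using compact_imp_bounded[OF \<open>compact K\<close>] unfolding bounded_pos by blast
  define r where "r = 1 + min 1 (d / (2 * B))"
  have "1 < r" "r \<le> 2" "r - 1 \<le> d / (2 * B)"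
    using \<open>d > 0\<close> \<open>B > 0\<close> by (simp_all add: r_def)
  show thesis
  proof (rule that[OF \<open>1 < r\<close>])
    fix z assume "z \<in> K"
    have "of_real r * z - z = of_real (r - 1) * z"
      by (simp add: algebra_simps)
    then have "dist (of_real r * z) z = (r - 1) * norm z"
      using \<open>1 < r\<close> by (simp only: dist_norm norm_mult norm_of_real abs_of_pos diff_gt_0_iff_gt)
    also have "\<dots> \<le> (r - 1) * B"
      using \<open>1 < r\<close> B[OF \<open>z \<in> K\<close>] by (intro mult_left_mono) auto
    also have "\<dots> \<le> d / (2 * B) * B"
      using \<open>B > 0\<close> \<open>r - 1 \<le> d / (2 * B)\<close> by (intro mult_right_mono) auto
    also have "\<dots> < d"
      using \<open>B > 0\<close> \<open>d > 0\<close> by simp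
    finally have "dist (f (of_real r * z)) (f z) < e"
      using d[OF scaled_in_K'[OF _ \<open>z \<in> K\<close>, of 1] scaled_in_K'[OF _ \<open>z \<in> K\<close>, of r]]
        \<open>1 < r\<close> \<open>r \<le> 2\<close> by simp
    moreover have "\<not> norm z < 1" using K \<open>z \<in> K\<close> by auto
    ultimately show "norm (exterior_dilation r f z - f z) < e"
      by (simp add: exterior_dilation_def dist_norm)
  qed
qed

lemma A0_classZ_approximation:
  assumes "f \<in> A0" and "compact K" and "K \<subseteq> {z. 1 \<le> norm z}" and "e > 0"
  obtains g where "g \<in> A0" "classZ g" "\<And>z. z \<in> K \<Longrightarrow> norm (g z - f z) < e"
proof -
  obtain r where "1 < r" and r: "\<And>z. z \<in> K \<Longrightarrow> norm (exterior_dilation r f z - f z) < e / 2"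
    using A0_dilation_uniformly_close[OF assms(1-3), of "e / 2"] \<open>e > 0\<close> by auto
  define g where "g z = exterior_dilation r f z + of_real (e / 4) * exterior_gap z" for z
  show thesis
  proof (rule that)
    show "g \<in> A0"
      unfolding g_def using \<open>1 < r\<close>
      by (intro A0_add_scaled exterior_dilation_in_A0 \<open>f \<in> A0\<close> exterior_gap_in_A0) simp
    show "classZ g"
      unfolding g_def[abs_def] using \<open>e > 0\<close>
      by (intro classZ_dilation_plus_exterior_gap \<open>f \<in> A0\<close> \<open>1 < r\<close>) simp
    fix z assume "z \<in> K"
    have "norm (of_real (e / 4) * exterior_gap z) \<le> e / 4 * (4 / 3)"
      using \<open>e > 0\<close> norm_exterior_gap_le[of z] by (simp add: norm_mult mult_left_mono)
    moreover have "g z - f z = (exterior_dilation r f z - f z) + of_real (e / 4) * exterior_gap z"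
      by (simp add: g_def)
    then have "norm (g z - f z)
        \<le> norm (exterior_dilation r f z - f z) + norm (of_real (e / 4) * exterior_gap z)"
      by (simp only: norm_triangle_ineq)
    ultimately show "norm (g z - f z) < e"
      using r[OF \<open>z \<in> K\<close>] \<open>e > 0\<close> by linarith
  qed
qed

lemma topspace_cc_topology: "topspace cc_topology = A0"
proof -
  have "cc_open A0"
    unfolding cc_open_def by (intro conjI ballI subset_refl exI[of _ "{}"] exI[of _ "1::real"]) auto
  then show ?thesis
    unfolding topspace_def openin_cc_topology cc_open_def by blast
qed

lemma openin_uniformly_steep_boundary:
  assumes lipschitz: "\<And>a b. \<bar>P a - P b\<bar> \<le> norm (a - b)"
  shows "openin cc_topology {f \<in> A0. uniformly_steep \<delta> M (\<lambda>y. P (f (cis y)))}"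
  unfolding openin_cc_topology cc_open_def
proof (intro conjI ballI)
  fix f assume f: "f \<in> {f \<in> A0. uniformly_steep \<delta> M (\<lambda>y. P (f (cis y)))}"
  have "1-lipschitz_on UNIV P"
    using lipschitz by (intro lipschitz_onI) (auto simp: dist_norm dist_real_def)
  then have "continuous_on UNIV P"
    by (rule lipschitz_on_continuous_on)
  moreover have "continuous_on UNIV (\<lambda>y. f (cis y))"
    using f by (intro continuous_on_compose2[OF A0_continuous_on_sphere continuous_on_cis[OF continuous_on_id]]) auto
  ultimately have "continuous_on UNIV (\<lambda>y. P (f (cis y)))"
    by (rule continuous_on_compose2) auto
  moreover have "P (f (cis (t + 2 * pi * of_int k))) = P (f (cis t))" for t k
  proof -
    have "cis (t + 2 * pi * of_int k) = cis t * cis (2 * pi * of_int k)"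
      by (rule cis_mult[symmetric])
    then show ?thesis by simp
  qed
  ultimately obtain e where "e > 0" and robust:
      "\<And>v. (\<And>t. \<bar>v t - P (f (cis t))\<bar> < e) \<Longrightarrow> uniformly_steep \<delta> M v"
    using uniformly_steep_robust f by (metis (no_types, lifting) mem_Collect_eq)
  have "g \<in> {f \<in> A0. uniformly_steep \<delta> M (\<lambda>y. P (f (cis y)))}"
    if "g \<in> A0" and close: "\<forall>z\<in>sphere 0 1. norm (g z - f z) < e" for g
  proof -
    have "\<bar>P (g (cis t)) - P (f (cis t))\<bar> < e" for t
      using lipschitz[of "g (cis t)" "f (cis t)"] close[rule_format, of "cis t"] by simp
    then have "uniformly_steep \<delta> M (\<lambda>y. P (g (cis y)))"
      by (rule robust)
    with \<open>g \<in> A0\<close> show ?thesis by simp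
  qed
  then show "\<exists>K e. compact K \<and> K \<subseteq> {z. 1 \<le> norm z} \<and> e > 0 \<and>
      {g \<in> A0. \<forall>z\<in>K. norm (g z - f z) < e} \<subseteq> {f \<in> A0. uniformly_steep \<delta> M (\<lambda>y. P (f (cis y)))}"
    using \<open>e > 0\<close> by (intro exI[of _ "sphere 0 1"] exI[of _ e]) auto
qed auto

lemma A0_classZ_eq_Inter_uniformly_steep:
  "{f \<in> A0. classZ f} =
     (\<Inter>n::nat. {f \<in> A0. uniformly_steep (1 / Suc n) n (\<lambda>y. Re (f (cis y)))} \<inter>
                {f \<in> A0. uniformly_steep (1 / Suc n) n (\<lambda>y. Im (f (cis y)))})"
proof -
  have "classZ f \<longleftrightarrow> (\<forall>n::nat. uniformly_steep (1 / Suc n) n (\<lambda>y. Re (f (cis y))) \<and>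
      uniformly_steep (1 / Suc n) n (\<lambda>y. Im (f (cis y))))" if "f \<in> A0" for f
    using that steep_everywhere_iff_uniformly_steep[of "\<lambda>y. Re (f (cis y))"]
      steep_everywhere_iff_uniformly_steep[of "\<lambda>y. Im (f (cis y))"]
    by (simp add: classZ_iff_steep_at A0_continuous_on_sphere all_conj_distrib)
  then show ?thesis by auto
qed

lemma gdelta_in_A0_classZ: "gdelta_in cc_topology {f \<in> A0. classZ f}"
proof -
  have "\<bar>Re a - Re b\<bar> \<le> norm (a - b)" "\<bar>Im a - Im b\<bar> \<le> norm (a - b)" for a b
    using abs_Re_le_cmod[of "a - b"] abs_Im_le_cmod[of "a - b"] by simp_all
  then show ?thesis
    unfolding A0_classZ_eq_Inter_uniformly_steep
    by (intro gdelta_in_Inter) (auto intro!: open_imp_gdelta_in openin_Int openin_uniformly_steep_boundary)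
qed

lemma closure_of_A0_classZ: "cc_topology closure_of {f \<in> A0. classZ f} = topspace cc_topology"
proof (intro antisym closure_of_subset_topspace subsetI)
  fix f assume f: "f \<in> topspace cc_topology"
  show "f \<in> cc_topology closure_of {f \<in> A0. classZ f}"
    unfolding in_closure_of
  proof (intro conjI allI impI)
    fix T assume "f \<in> T \<and> openin cc_topology T"
    then obtain K e where K: "compact K" "K \<subseteq> {z. 1 \<le> norm z}" "e > 0"
        "{g \<in> A0. \<forall>z\<in>K. norm (g z - f z) < e} \<subseteq> T"
      unfolding openin_cc_topology cc_open_def by blast
    obtain g where "g \<in> A0" "classZ g" "\<And>z. z \<in> K \<Longrightarrow> norm (g z - f z) < e"
      using A0_classZ_approximation[OF _ K(1-3)] f topspace_cc_topology by auto
    then show "\<exists>g. g \<in> {f \<in> A0. classZ f} \<and> g \<in> T"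
      using K(4) by blast
  qed (rule f)
qed

theorem proposition2p4:
  shows "gdelta_in cc_topology {f \<in> A0. classZ f} \<and>
         cc_topology closure_of {f \<in> A0. classZ f} = topspace cc_topology"
  using gdelta_in_A0_classZ closure_of_A0_classZ by blast

end
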